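(* Let $R\ge2$ and let $\mu$ be the hook partition of $2^{R-1}$ with $H(\mu)=\{2^{R-1},b,b-1,\dots,1\}$, where $0\le b\le2^{R-1}-1$ ($b=0$ meaning $H(\mu)=\{2^{R-1}\}$). Then \[ S_{P_1(\mu)}(\mu)=\begin{cases}1,&b\text{ even},\\2,&b\text{ odd}.\end{cases} \]
   Context: $f^\lambda$ is the number of standard Young tableaux of shape $\lambda$; $\mathrm{Od}(N)=\pm1$ according as the odd part of $N\ge1$ is $\equiv1$ or $\equiv3\pmod4$. For $\lambda=(\lambda_1\ge\dots\ge\lambda_k>0)$, $H(\lambda):=\{\lambda_i+k-i\}$. $P_1(\mu)$ is the set of partitions $\lambda$ with $H(\lambda)=(H(\mu)\cup\{x+2^R\})\setminus\{x\}$ for some $x\in H(\mu)$ (Type I $2^R$-parents). For a finite set $L$ of partitions, $S_L(\mu):=\frac{1}{\mathrm{Od}(f^\mu)}\sum_{\lambda\in L}\mathrm{Od}(f^\lambda)$. *)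

theory Defs
  imports Complex_Main "HOL-Library.FuncSet" "HOL-Computational_Algebra.Primes"
begin

definition is_partition :: "nat list \<Rightarrow> bool" where
  "is_partition lam \<longleftrightarrow> sorted_wrt (\<ge>) lam \<and> (\<forall>x\<in>set lam. 0 < x)"

definition cells :: "nat list \<Rightarrow> (nat \<times> nat) set" where
  "cells lam = {(i, j). i < length lam \<and> j < lam ! i}"

definition SYT :: "nat list \<Rightarrow> ((nat \<times> nat) \<Rightarrow> nat) set" where
  "SYT lam = {T \<in> cells lam \<rightarrow>\<^sub>E {1..sum_list lam}.
      bij_betw T (cells lam) {1..sum_list lam} \<and>
      (\<forall>i j. (i, j + 1) \<in> cells lam \<longrightarrow> T (i, j) < T (i, j + 1)) \<and>
      (\<forall>i j. (i + 1, j) \<in> cells lam \<longrightarrow> T (i, j) < T (i + 1, j))}"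

definition f_syt :: "nat list \<Rightarrow> nat" where
  "f_syt lam = card (SYT lam)"

definition odd_part :: "nat \<Rightarrow> nat" where
  "odd_part N = N div 2 ^ multiplicity (2::nat) N"

definition Od :: "nat \<Rightarrow> int" where
  "Od N = (if odd_part N mod 4 = 1 then 1 else -1)"

text \<open>H(lambda) = {lambda_i + k - i}, 1-indexed i; here 0-indexed.\<close>
definition H :: "nat list \<Rightarrow> nat set" where
  "H lam = {lam ! i + length lam - 1 - i | i. i < length lam}"

definition P1 :: "nat \<Rightarrow> nat list \<Rightarrow> nat list set" where
  "P1 R mu = {lam. is_partition lam \<and>
      (\<exists>x\<in>H mu. H lam = (H mu \<union> {x + 2 ^ R}) - {x})}"

definition S :: "nat list set \<Rightarrow> nat list \<Rightarrow> real" where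
  "S L mu = (\<Sum>lam\<in>L. real_of_int (Od (f_syt lam))) / real_of_int (Od (f_syt mu))"

end

theory Submission
  imports Defs
begin

text \<open>With \<open>N = 2^(R-1)\<close>, the condition on \<open>H \<mu>\<close> forces \<open>\<mu>\<close> to be the hook
  \<open>(N - b, 1^b)\<close>. Its Type I parents are the hook \<open>(3N - b, 1^b)\<close> (moving the hook length
  \<open>N\<close>) and, for \<open>1 \<le> x \<le> b\<close>, the shape \<open>(x + 2N - b, N - b + 1, 2^(b-x), 1^(x-1))\<close>.
  Their numbers of standard tableaux come from the hook length formula, which for these two
  families is proved by induction via the branching rule (remove the cell holding the largest
  entry). Up to the sign \<open>Od\<close> of \<open>f\<^sup>\<mu> = C(N-1, b)\<close>, the first parent contributes \<open>+1\<close> and the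
  \<open>x\<close>-th one \<open>(-1)^(b-x)\<close>: this rests on \<open>Od C(2N-1, m) = (-1)^m\<close> and \<open>Od C(3N, N) = -1\<close>,
  consequences of \<open>Od (2^(r+1) - a) = - Od a\<close> for \<open>0 < a < 2^r\<close>. The alternating sum over
  \<open>x\<close> is 0 or 1 according to the parity of \<open>b\<close>.\<close>

section \<open>Standard tableaux on sets of cells\<close>

text \<open>Tableaux are defined on arbitrary cell sets so that corners can be removed; on the diagram of
  a partition they are the tableaux counted by \<open>f_syt\<close> (see \<open>f_syt_eq_card_tableaux\<close>).\<close>

definition tableaux :: "(nat \<times> nat) set \<Rightarrow> ((nat \<times> nat) \<Rightarrow> nat) set" where
  "tableaux D = {T \<in> D \<rightarrow>\<^sub>E {1..card D}. bij_betw T D {1..card D} \<and>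
      (\<forall>i j. (i, j + 1) \<in> D \<longrightarrow> T (i, j) < T (i, j + 1)) \<and>
      (\<forall>i j. (i + 1, j) \<in> D \<longrightarrow> T (i, j) < T (i + 1, j))}"

definition down_closed :: "(nat \<times> nat) set \<Rightarrow> bool" where
  "down_closed D \<longleftrightarrow>
     (\<forall>i j. ((i, j + 1) \<in> D \<longrightarrow> (i, j) \<in> D) \<and> ((i + 1, j) \<in> D \<longrightarrow> (i, j) \<in> D))"

definition corners :: "(nat \<times> nat) set \<Rightarrow> (nat \<times> nat) set" where
  "corners D = {(i, j) \<in> D. (i, j + 1) \<notin> D \<and> (i + 1, j) \<notin> D}"

lemma card_tableaux_empty: "card (tableaux {}) = 1"
proof -
  have "tableaux {} = {\<lambda>_. undefined}"
    unfolding tableaux_def by (auto simp: PiE_def extensional_def bij_betw_def)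
  then show ?thesis by simp
qed

lemma finite_tableaux: "finite D \<Longrightarrow> finite (tableaux D)"
  by (rule finite_subset[of _ "D \<rightarrow>\<^sub>E {1..card D}"]) (auto simp: tableaux_def finite_PiE)

lemma tableauxD:
  assumes "T \<in> tableaux D"
  shows "T \<in> D \<rightarrow>\<^sub>E {1..card D}" "bij_betw T D {1..card D}"
    and "(i, j + 1) \<in> D \<Longrightarrow> T (i, j) < T (i, j + 1)"
    and "(i + 1, j) \<in> D \<Longrightarrow> T (i, j) < T (i + 1, j)"
  using assms unfolding tableaux_def by blast+

lemma tableauxI:
  assumes "T \<in> D \<rightarrow>\<^sub>E {1..card D}" "bij_betw T D {1..card D}"
    and "\<And>i j. (i, j + 1) \<in> D \<Longrightarrow> T (i, j) < T (i, j + 1)"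
    and "\<And>i j. (i + 1, j) \<in> D \<Longrightarrow> T (i, j) < T (i + 1, j)"
  shows "T \<in> tableaux D"
  using assms unfolding tableaux_def by blast

lemma down_closedD:
  "down_closed D \<Longrightarrow> (i, j + 1) \<in> D \<Longrightarrow> (i, j) \<in> D"
  "down_closed D \<Longrightarrow> (i + 1, j) \<in> D \<Longrightarrow> (i, j) \<in> D"
  unfolding down_closed_def by blast+

lemma atLeastAtMost_diff_top: "{1..n} - {n} = {1..n - 1 :: nat}"
  by auto

lemma tableau_max_at_corner:
  assumes "T \<in> tableaux D" "c \<in> D" "T c = card D"
  shows "c \<in> corners D"
proof -
  have le: "T x \<le> card D" if "x \<in> D" for x
    using tableauxD(1)[OF assms(1)] that by auto
  obtain i j where "c = (i, j)" by fastforce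
  with assms le tableauxD(3,4)[OF assms(1), of i j] show ?thesis
    unfolding corners_def by fastforce
qed

lemma restrict_tableau_corner:
  assumes "finite D" "down_closed D" "c \<in> corners D" "T \<in> tableaux D" "T c = card D"
  shows "restrict T (D - {c}) \<in> tableaux (D - {c})"
proof (rule tableauxI)
  have "c \<in> D" using assms(3) by (auto simp: corners_def)
  then have "card (D - {c}) = card D - 1"
    using assms(1) by simp
  moreover have "bij_betw T (D - {c}) ({1..card D} - {card D})"
    using bij_betw_DiffI[OF tableauxD(2)[OF assms(4)], of "{c}" "{card D}"] \<open>c \<in> D\<close> assms(1,5)
    by (auto simp: Suc_le_eq card_gt_0_iff)
  ultimately have bij: "bij_betw T (D - {c}) {1..card (D - {c})}"
    by (metis atLeastAtMost_diff_top)
  then show "bij_betw (restrict T (D - {c})) (D - {c}) {1..card (D - {c})}"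
    by (rule bij_betw_cong[THEN iffD1, rotated]) simp
  show "restrict T (D - {c}) \<in> D - {c} \<rightarrow>\<^sub>E {1..card (D - {c})}"
    using bij_betw_imp_funcset[OF bij] by simp
next
  fix i j
  assume "(i, j + 1) \<in> D - {c}"
  moreover from this have "(i, j) \<in> D - {c}"
    using assms(2,3) by (auto simp: corners_def dest: down_closedD)
  ultimately show "restrict T (D - {c}) (i, j) < restrict T (D - {c}) (i, j + 1)"
    using tableauxD(3)[OF assms(4)] by simp
next
  fix i j
  assume "(i + 1, j) \<in> D - {c}"
  moreover from this have "(i, j) \<in> D - {c}"
    using assms(2,3) by (auto simp: corners_def dest: down_closedD)
  ultimately show "restrict T (D - {c}) (i, j) < restrict T (D - {c}) (i + 1, j)"
    using tableauxD(4)[OF assms(4)] by simp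
qed

lemma extend_tableau_corner:
  assumes "finite D" "down_closed D" "c \<in> corners D" "T \<in> tableaux (D - {c})"
  shows "T(c := card D) \<in> tableaux D"
proof -
  have "c \<in> D" using assms(3) by (auto simp: corners_def)
  then have card: "card (D - {c}) = card D - 1" "card D \<ge> 1"
    using assms(1) by (auto simp: Suc_le_eq card_gt_0_iff)
  have less: "T x < card D" if "x \<in> D - {c}" for x
  proof -
    have "T x \<le> card D - 1"
      using PiE_mem[OF tableauxD(1)[OF assms(4)] that] card by simp
    with card show ?thesis by simp
  qed
  have "bij_betw (T(c := card D)) (D - {c}) ({1..card D} - {card D})"
    unfolding atLeastAtMost_diff_top card(1)[symmetric]
    using tableauxD(2)[OF assms(4)] by (rule bij_betw_cong[THEN iffD1, rotated]) simp
  then have "bij_betw (T(c := card D)) (D - {c} \<union> {c})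
      ({1..card D} - {card D} \<union> {(T(c := card D)) c})"
    by (intro notIn_Un_bij_betw) auto
  moreover have "D - {c} \<union> {c} = D" "{1..card D} - {card D} \<union> {(T(c := card D)) c} = {1..card D}"
    using \<open>c \<in> D\<close> card by auto
  ultimately have bij: "bij_betw (T(c := card D)) D {1..card D}"
    by (simp only:)
  show ?thesis
  proof (rule tableauxI[OF _ bij])
    have "T(c := card D) \<in> extensional D"
      using tableauxD(1)[OF assms(4)] \<open>c \<in> D\<close> by (auto simp: extensional_def PiE_def)
    then show "T(c := card D) \<in> D \<rightarrow>\<^sub>E {1..card D}"
      using bij_betw_imp_funcset[OF bij] by (simp only: PiE_def Int_iff)
  next
    fix i j
    assume ij: "(i, j + 1) \<in> D"
    then have "(i, j) \<in> D - {c}"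
      using assms(2,3) by (auto simp: corners_def dest: down_closedD)
    with ij less show "(T(c := card D)) (i, j) < (T(c := card D)) (i, j + 1)"
      using tableauxD(3)[OF assms(4), of i j] by (cases "(i, j + 1) = c") auto
  next
    fix i j
    assume ij: "(i + 1, j) \<in> D"
    then have "(i, j) \<in> D - {c}"
      using assms(2,3) by (auto simp: corners_def dest: down_closedD)
    with ij less show "(T(c := card D)) (i, j) < (T(c := card D)) (i + 1, j)"
      using tableauxD(4)[OF assms(4), of i j] by (cases "(i + 1, j) = c") auto
  qed
qed

lemma card_tableaux_corner:
  assumes "finite D" "down_closed D" "c \<in> corners D"
  shows "card {T \<in> tableaux D. T c = card D} = card (tableaux (D - {c}))"
proof (rule bij_betw_same_card[of "\<lambda>T. restrict T (D - {c})"],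
       rule bij_betw_byWitness[where f' = "\<lambda>T. T(c := card D)"])
  have "c \<in> D" using assms(3) by (auto simp: corners_def)
  show "\<forall>T\<in>{T \<in> tableaux D. T c = card D}. (restrict T (D - {c}))(c := card D) = T"
    using \<open>c \<in> D\<close> by (auto simp: fun_eq_iff PiE_arb[OF tableauxD(1)])
  show "\<forall>T\<in>tableaux (D - {c}). restrict (T(c := card D)) (D - {c}) = T"
    by (auto simp: fun_eq_iff PiE_arb[OF tableauxD(1)])
  show "(\<lambda>T. restrict T (D - {c})) ` {T \<in> tableaux D. T c = card D}
      \<subseteq> tableaux (D - {c})"
    using restrict_tableau_corner[OF assms] by blast
  show "(\<lambda>T. T(c := card D)) ` tableaux (D - {c}) \<subseteq> {T \<in> tableaux D. T c = card D}"
    using extend_tableau_corner[OF assms] by auto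
qed

lemma card_tableaux_branching:
  assumes "finite D" "down_closed D" "D \<noteq> {}"
  shows "card (tableaux D) = (\<Sum>c\<in>corners D. card (tableaux (D - {c})))"
proof -
  let ?A = "\<lambda>c. {T \<in> tableaux D. T c = card D}"
  have "tableaux D \<subseteq> (\<Union>c\<in>corners D. ?A c)"
  proof
    fix T assume T: "T \<in> tableaux D"
    have "card D \<in> T ` D"
      using assms(1,3) tableauxD(2)[OF T] by (simp add: bij_betw_def Suc_le_eq card_gt_0_iff)
    then obtain c where "c \<in> D" "T c = card D"
      by (metis imageE)
    with T show "T \<in> (\<Union>c\<in>corners D. ?A c)"
      using tableau_max_at_corner by blast
  qed
  then have "card (tableaux D) = card (\<Union>c\<in>corners D. ?A c)"
    by (metis (no_types, lifting) UN_least mem_Collect_eq subsetI subset_antisym)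
  also have "\<dots> = (\<Sum>c\<in>corners D. card (?A c))"
  proof (rule card_UN_disjoint)
    show "finite (corners D)"
      using assms(1) by (rule rev_finite_subset) (auto simp: corners_def)
    show "\<forall>c\<in>corners D. finite (?A c)"
      using finite_tableaux[OF assms(1)] by simp
    show "\<forall>c\<in>corners D. \<forall>c'\<in>corners D. c \<noteq> c' \<longrightarrow> ?A c \<inter> ?A c' = {}"
    proof (intro ballI impI)
      fix c c' assume "c \<in> corners D" "c' \<in> corners D" "c \<noteq> c'"
      then have "c \<in> D" "c' \<in> D" "c \<noteq> c'"
        by (auto simp: corners_def)
      then show "?A c \<inter> ?A c' = {}"
        by (auto dest!: tableauxD(2) bij_betw_imp_inj_on) (metis inj_onD)
    qed
  qed
  also have "\<dots> = (\<Sum>c\<in>corners D. card (tableaux (D - {c})))"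
    using card_tableaux_corner[OF assms(1,2)] by simp
  finally show ?thesis .
qed

definition hook_cells :: "nat \<Rightarrow> nat \<Rightarrow> (nat \<times> nat) set" where
  "hook_cells p e = {(i, j). (i = 0 \<and> j < p) \<or> (1 \<le> i \<and> i \<le> e \<and> j = 0)}"

lemma finite_hook_cells: "finite (hook_cells p e)"
  by (rule finite_subset[of _ "{..p + e} \<times> {..p + e}"]) (auto simp: hook_cells_def)

lemma down_closed_hook_cells: "p \<ge> 1 \<Longrightarrow> down_closed (hook_cells p e)"
  unfolding down_closed_def hook_cells_def by auto

lemma corners_hook_cells:
  "p \<ge> 1 \<Longrightarrow> corners (hook_cells p e) =
     (if p \<ge> 2 \<or> e = 0 then {(0, p - 1)} else {}) \<union> (if e \<ge> 1 then {(e, 0)} else {})"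
  unfolding corners_def hook_cells_def by (auto split: if_splits)

lemma card_tableaux_hook:
  "p \<ge> 1 \<Longrightarrow> card (tableaux (hook_cells p e)) = (p + e - 1) choose e"
proof (induction "p + e" arbitrary: p e rule: less_induct)
  case less
  have arm: "hook_cells p e - {(0, p - 1)} = hook_cells (p - 1) e" if "p \<ge> 2"
    using that by (auto simp: hook_cells_def)
  have leg: "hook_cells p e - {(e, 0)} = hook_cells p (e - 1)" if "e \<ge> 1"
    using that by (auto simp: hook_cells_def)
  have "(0, 0) \<in> hook_cells p e"
    using less.prems by (simp add: hook_cells_def)
  then have branch: "card (tableaux (hook_cells p e))
      = (\<Sum>c\<in>corners (hook_cells p e). card (tableaux (hook_cells p e - {c})))"
    using card_tableaux_branching[OF finite_hook_cells down_closed_hook_cells[OF less.prems]] by blast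
  consider "p = 1" "e = 0" | "p \<ge> 2" "e = 0" | "p = 1" "e \<ge> 1" | "p \<ge> 2" "e \<ge> 1"
    using less.prems by linarith
  then show ?case
  proof cases
    case 1
    then have "card (tableaux (hook_cells p e)) = card (tableaux (hook_cells 1 0 - {(0, 0)}))"
      using branch corners_hook_cells[OF less.prems] by simp
    also have "hook_cells 1 0 - {(0, 0)} = {}"
      by (auto simp: hook_cells_def)
    finally show ?thesis
      using 1 card_tableaux_empty by simp
  next
    case 2
    then show ?thesis
      using branch corners_hook_cells[OF less.prems] arm less.hyps[of "p - 1" e] by simp
  next
    case 3
    then show ?thesis
      using branch corners_hook_cells[OF less.prems] leg less.hyps[of p "e - 1"] by simp
  next
    case 4
    then obtain k where k: "e = Suc k"
      by (cases e) auto
    have "Suc (p + k - 1) = p + k"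
      using 4 by simp
    with 4 k show ?thesis
      using branch corners_hook_cells[OF less.prems] arm leg binomial_Suc_Suc[of "p + k - 1" k]
        less.hyps[of "p - 1" e] less.hyps[of p "e - 1"] by simp
  qed
qed

definition double_hook_cells :: "nat \<Rightarrow> nat \<Rightarrow> nat \<Rightarrow> nat \<Rightarrow> (nat \<times> nat) set" where
  "double_hook_cells p q c d = {(i, j). (i = 0 \<and> j < p) \<or> (i = 1 \<and> j < q)
      \<or> (2 \<le> i \<and> i < c + 2 \<and> j < 2) \<or> (c + 2 \<le> i \<and> i < c + d + 2 \<and> j = 0)}"

lemma finite_double_hook_cells: "finite (double_hook_cells p q c d)"
  by (rule finite_subset[of _ "{..p + q + c + d + 2} \<times> {..p + q + 2}"])
    (auto simp: double_hook_cells_def)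

lemma down_closed_double_hook_cells:
  "q \<ge> 2 \<Longrightarrow> p \<ge> q \<Longrightarrow> down_closed (double_hook_cells p q c d)"
  unfolding down_closed_def double_hook_cells_def by auto

lemma zero_in_double_hook_cells: "p > 0 \<Longrightarrow> (0, 0) \<in> double_hook_cells p q c d"
  unfolding double_hook_cells_def by auto

lemma corners_double_hook_cells:
  assumes "q \<ge> 2" "p \<ge> q"
  shows "corners (double_hook_cells p q c d) =
    (if p > q then {(0, p - 1)} else {}) \<union> (if q > 2 \<or> c = 0 then {(1, q - 1)} else {}) \<union>
    (if c > 0 then {(c + 1, 1)} else {}) \<union> (if d > 0 then {(c + d + 1, 0)} else {})"
    (is "_ = ?C")
proof (rule set_eqI, clarify)
  fix i j
  show "(i, j) \<in> corners (double_hook_cells p q c d) \<longleftrightarrow> (i, j) \<in> ?C"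
    using assms unfolding corners_def double_hook_cells_def
    by (cases "i = 0"; cases "i = 1"; cases "i < c + 2"; cases "i = c + 1";
        cases "i < c + d + 2"; cases "i = c + d + 1") auto
qed

lemma double_hook_cells_remove_row0:
  "q \<ge> 2 \<Longrightarrow> p > q \<Longrightarrow> double_hook_cells p q c d - {(0, p - 1)} = double_hook_cells (p - 1) q c d"
  unfolding double_hook_cells_def by auto

lemma double_hook_cells_remove_row1:
  "q > 2 \<Longrightarrow> p \<ge> q \<Longrightarrow> double_hook_cells p q c d - {(1, q - 1)} = double_hook_cells p (q - 1) c d"
  unfolding double_hook_cells_def by auto

lemma double_hook_cells_remove_row1_hook:
  "p \<ge> 2 \<Longrightarrow> double_hook_cells p 2 0 d - {(1, 1)} = hook_cells p (d + 1)"
  unfolding double_hook_cells_def hook_cells_def by auto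

lemma double_hook_cells_remove_col1:
  "q \<ge> 2 \<Longrightarrow> p \<ge> q \<Longrightarrow> c > 0 \<Longrightarrow>
    double_hook_cells p q c d - {(c + 1, 1)} = double_hook_cells p q (c - 1) (d + 1)"
  unfolding double_hook_cells_def by auto

lemma double_hook_cells_remove_col0:
  "q \<ge> 2 \<Longrightarrow> p \<ge> q \<Longrightarrow> d > 0 \<Longrightarrow>
    double_hook_cells p q c d - {(c + d + 1, 0)} = double_hook_cells p q c (d - 1)"
  unfolding double_hook_cells_def by auto

section \<open>The hook length formula for double hooks\<close>

text \<open>The hook length formula \<open>n! / \<Prod> hooks\<close> for the shape \<open>(p, q, 2^c, 1^d)\<close> with
  \<open>p \<ge> q \<ge> 2\<close>. Each \<open>ratio_\<dots>\<close> below is the quotient of its value at the shape with one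
  corner removed by its value at the shape itself; they sum to 1, which is the branching rule.\<close>

definition double_hook_formula :: "nat \<Rightarrow> nat \<Rightarrow> nat \<Rightarrow> nat \<Rightarrow> real" where
  "double_hook_formula p q c d = fact (p + q + 2 * c + d) * real (p - q + 1) * real (d + 1) /
     (real (p + c + d + 1) * real (p + c) * fact (p - 1) * real (q + c + d) * real (q + c - 1)
      * fact (q - 2) * fact c * fact (c + d + 1))"

lemma divide_eq_mult_ratio:
  fixes n1 d1 n2 d2 rn rd :: real
  assumes "d1 \<noteq> 0" "d2 \<noteq> 0" "rd \<noteq> 0" "n1 * d2 * rd = n2 * rn * d1"
  shows "n1 / d1 = n2 / d2 * (rn / rd)"
  using assms by (simp add: field_simps)

definition ratio_row0 :: "real \<Rightarrow> real \<Rightarrow> real \<Rightarrow> real \<Rightarrow> real" where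
  "ratio_row0 P Q C Dd = ((P + C + Dd + 1) * (P + C) * (P - 1) * (P - Q)) /
      ((P + Q + 2 * C + Dd) * (P + C + Dd) * (P + C - 1) * (P - Q + 1))"

lemma double_hook_formula_row0:
  assumes "q \<ge> 2" "p \<ge> q + 1"
  shows "double_hook_formula (p - 1) q c d =
    double_hook_formula p q c d * ratio_row0 (real p) (real q) (real c) (real d)"
proof -
  have n: "fact (p + q + 2 * c + d) = real (p + q + 2 * c + d) * (fact (p - 1 + q + 2 * c + d) :: real)"
    using assms fact_Suc[of "p - 1 + q + 2 * c + d"] by (simp add: Suc_diff_le)
  have pf: "fact (p - 1) = real (p - 1) * (fact (p - 1 - 1) :: real)"
    by (rule fact_reduce) (use assms in simp)
  define X where "X = (fact (p - 1 + q + 2 * c + d) :: real)"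
  define Y where "Y = (fact (p - 1 - 1) :: real)"
  define Z where "Z = (fact (q - 2) :: real)"
  define W where "W = (fact c :: real)"
  define V where "V = (fact (c + d + 1) :: real)"
  define P where "P = real p"
  define Q where "Q = real q"
  define C where "C = real c"
  define Dd where "Dd = real d"
  have nz: "X > 0" "Y > 0" "Z > 0" "W > 0" "V > 0" by (simp_all add: X_def Y_def Z_def W_def V_def)
  have hy: "Q \<ge> 2" "P \<ge> Q + 1" "C \<ge> 0" "Dd \<ge> 0" using assms by (simp_all add: P_def Q_def C_def Dd_def)
  have cs: "real (p - 1 - q + 1) = P - Q" "real (d + 1) = Dd + 1" "real (p - 1 + c + d + 1) = P + C + Dd"
    "real (p - 1 + c) = P - 1 + C" "real (q + c + d) = Q + C + Dd" "real (q + c - 1) = Q + C - 1"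
    "real (p + q + 2 * c + d) = P + Q + 2 * C + Dd" "real (p - q + 1) = P - Q + 1"
    "real (p + c + d + 1) = P + C + Dd + 1" "real (p + c) = P + C" "real (p - 1) = P - 1"
    using assms by (simp_all add: P_def Q_def C_def Dd_def of_nat_diff)
  have e1: "double_hook_formula (p - 1) q c d = X * (P - Q) * (Dd + 1) /
     ((P + C + Dd) * (P - 1 + C) * Y * (Q + C + Dd) * (Q + C - 1) * Z * W * V)"
    unfolding double_hook_formula_def X_def Y_def Z_def W_def V_def cs ..
  have e2: "double_hook_formula p q c d = (P + Q + 2 * C + Dd) * X * (P - Q + 1) * (Dd + 1) /
     ((P + C + Dd + 1) * (P + C) * ((P - 1) * Y) * (Q + C + Dd) * (Q + C - 1) * Z * W * V)"
    unfolding double_hook_formula_def X_def Y_def Z_def W_def V_def n pf cs ..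
  show ?thesis unfolding e1 e2 ratio_row0_def P_def[symmetric] Q_def[symmetric] C_def[symmetric] Dd_def[symmetric]
  proof (rule divide_eq_mult_ratio)
    show "(P + C + Dd) * (P - 1 + C) * Y * (Q + C + Dd) * (Q + C - 1) * Z * W * V \<noteq> 0"
      using hy nz by simp
    show "(P + C + Dd + 1) * (P + C) * ((P - 1) * Y) * (Q + C + Dd) * (Q + C - 1) * Z * W * V \<noteq> 0"
      using hy nz by simp
    show "(P + Q + 2 * C + Dd) * (P + C + Dd) * (P + C - 1) * (P - Q + 1) \<noteq> 0"
      using hy nz by simp
  qed algebra
qed

definition ratio_row1 :: "real \<Rightarrow> real \<Rightarrow> real \<Rightarrow> real \<Rightarrow> real" where
  "ratio_row1 P Q C Dd = ((Q + C + Dd) * (Q + C - 1) * (Q - 2) * (P - Q + 2)) /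
      ((P + Q + 2 * C + Dd) * (Q - 1 + C + Dd) * (Q + C - 2) * (P - Q + 1))"

lemma double_hook_formula_row1:
  assumes "q \<ge> 3" "p \<ge> q"
  shows "double_hook_formula p (q - 1) c d =
    double_hook_formula p q c d * ratio_row1 (real p) (real q) (real c) (real d)"
proof -
  have nn: "Suc (p + (q - 1) + 2 * c + d) = p + q + 2 * c + d" using assms by simp
  have qq: "Suc (q - 1 - 2) = q - 2" using assms by simp
  define X where "X = (fact (p + (q - 1) + 2 * c + d) :: real)"
  define Y where "Y = (fact (p - 1) :: real)"
  define Z where "Z = (fact (q - 1 - 2) :: real)"
  define W where "W = (fact c :: real)"
  define V where "V = (fact (c + d + 1) :: real)"
  define P where "P = real p"
  define Q where "Q = real q"
  define C where "C = real c"
  define Dd where "Dd = real d"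
  have n: "fact (p + q + 2 * c + d) = real (p + q + 2 * c + d) * X"
    using fact_Suc[of "p + (q - 1) + 2 * c + d", unfolded nn] unfolding X_def by simp
  have qf: "fact (q - 2) = real (q - 2) * Z"
    using fact_Suc[of "q - 1 - 2", unfolded qq] unfolding Z_def by simp
  have nz: "X > 0" "Y > 0" "Z > 0" "W > 0" "V > 0" by (simp_all add: X_def Y_def Z_def W_def V_def)
  have hy: "Q \<ge> 3" "P \<ge> Q" "C \<ge> 0" "Dd \<ge> 0" using assms by (simp_all add: P_def Q_def C_def Dd_def)
  have cs: "real (p - (q - 1) + 1) = P - Q + 2" "real (d + 1) = Dd + 1" "real (p + c + d + 1) = P + C + Dd + 1"
    "real (p + c) = P + C" "real (q - 1 + c + d) = Q - 1 + C + Dd" "real (q - 1 + c - 1) = Q + C - 2"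
    "real (p + q + 2 * c + d) = P + Q + 2 * C + Dd" "real (p - q + 1) = P - Q + 1"
    "real (q + c + d) = Q + C + Dd" "real (q + c - 1) = Q + C - 1" "real (q - 2) = Q - 2"
    using assms by (simp_all add: P_def Q_def C_def Dd_def of_nat_diff)
  have e1: "double_hook_formula p (q - 1) c d = X * (P - Q + 2) * (Dd + 1) /
     ((P + C + Dd + 1) * (P + C) * Y * (Q - 1 + C + Dd) * (Q + C - 2) * Z * W * V)"
    unfolding double_hook_formula_def X_def[symmetric] Y_def[symmetric] Z_def[symmetric] W_def[symmetric] V_def[symmetric] cs ..
  have e2: "double_hook_formula p q c d = (P + Q + 2 * C + Dd) * X * (P - Q + 1) * (Dd + 1) /
     ((P + C + Dd + 1) * (P + C) * Y * (Q + C + Dd) * (Q + C - 1) * ((Q - 2) * Z) * W * V)"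
    unfolding double_hook_formula_def n qf Y_def[symmetric] W_def[symmetric] V_def[symmetric] cs ..
  show ?thesis unfolding e1 e2 ratio_row1_def P_def[symmetric] Q_def[symmetric] C_def[symmetric] Dd_def[symmetric]
  proof (rule divide_eq_mult_ratio)
    show "(P + C + Dd + 1) * (P + C) * Y * (Q - 1 + C + Dd) * (Q + C - 2) * Z * W * V \<noteq> 0"
      using hy nz by simp
    show "(P + C + Dd + 1) * (P + C) * Y * (Q + C + Dd) * (Q + C - 1) * ((Q - 2) * Z) * W * V \<noteq> 0"
      using hy nz by simp
    show "(P + Q + 2 * C + Dd) * (Q - 1 + C + Dd) * (Q + C - 2) * (P - Q + 1) \<noteq> 0"
      using hy nz by simp
  qed algebra
qed

definition ratio_col1 :: "real \<Rightarrow> real \<Rightarrow> real \<Rightarrow> real \<Rightarrow> real" where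
  "ratio_col1 P Q C Dd = ((P + C) * (Q + C - 1) * C * (Dd + 2)) /
      ((P + Q + 2 * C + Dd) * (P + C - 1) * (Q + C - 2) * (Dd + 1))"

lemma double_hook_formula_col1:
  assumes "q \<ge> 2" "p \<ge> q" "c \<ge> 1"
  shows "double_hook_formula p q (c - 1) (d + 1) =
    double_hook_formula p q c d * ratio_col1 (real p) (real q) (real c) (real d)"
proof -
  have nn: "Suc (p + q + 2 * (c - 1) + (d + 1)) = p + q + 2 * c + d" using assms by simp
  have cc: "Suc (c - 1) = c" using assms by simp
  have vv: "c - 1 + (d + 1) + 1 = c + d + 1" using assms by simp
  define X where "X = (fact (p + q + 2 * (c - 1) + (d + 1)) :: real)"
  define Y where "Y = (fact (p - 1) :: real)"
  define Z where "Z = (fact (q - 2) :: real)"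
  define W where "W = (fact (c - 1) :: real)"
  define V where "V = (fact (c + d + 1) :: real)"
  define P where "P = real p"
  define Q where "Q = real q"
  define C where "C = real c"
  define Dd where "Dd = real d"
  have n: "fact (p + q + 2 * c + d) = real (p + q + 2 * c + d) * X"
    using fact_Suc[of "p + q + 2 * (c - 1) + (d + 1)", unfolded nn] unfolding X_def by simp
  have cf: "fact c = real c * W"
    using fact_Suc[of "c - 1", unfolded cc] unfolding W_def by simp
  have nz: "X > 0" "Y > 0" "Z > 0" "W > 0" "V > 0" by (simp_all add: X_def Y_def Z_def W_def V_def)
  have hy: "Q \<ge> 2" "P \<ge> Q" "C \<ge> 1" "Dd \<ge> 0" using assms by (simp_all add: P_def Q_def C_def Dd_def)
  have cs: "real (p - q + 1) = P - Q + 1" "real (d + 1 + 1) = Dd + 2" "real (p + (c - 1) + (d + 1) + 1) = P + C + Dd + 1"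
    "real (p + (c - 1)) = P + C - 1" "real (q + (c - 1) + (d + 1)) = Q + C + Dd" "real (q + (c - 1) - 1) = Q + C - 2"
    "real (p + q + 2 * c + d) = P + Q + 2 * C + Dd" "real (d + 1) = Dd + 1" "real (p + c + d + 1) = P + C + Dd + 1"
    "real (p + c) = P + C" "real (q + c + d) = Q + C + Dd" "real (q + c - 1) = Q + C - 1" "real c = C"
    using assms by (simp_all add: P_def Q_def C_def Dd_def of_nat_diff)
  have e1: "double_hook_formula p q (c - 1) (d + 1) = X * (P - Q + 1) * (Dd + 2) /
     ((P + C + Dd + 1) * (P + C - 1) * Y * (Q + C + Dd) * (Q + C - 2) * Z * W * V)"
    unfolding double_hook_formula_def vv X_def[symmetric] Y_def[symmetric] Z_def[symmetric] W_def[symmetric] V_def[symmetric] cs ..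
  have e2: "double_hook_formula p q c d = (P + Q + 2 * C + Dd) * X * (P - Q + 1) * (Dd + 1) /
     ((P + C + Dd + 1) * (P + C) * Y * (Q + C + Dd) * (Q + C - 1) * Z * (C * W) * V)"
    unfolding double_hook_formula_def n cf Y_def[symmetric] Z_def[symmetric] V_def[symmetric] cs ..
  show ?thesis unfolding e1 e2 ratio_col1_def P_def[symmetric] Q_def[symmetric] C_def[symmetric] Dd_def[symmetric]
  proof (rule divide_eq_mult_ratio)
    show "(P + C + Dd + 1) * (P + C - 1) * Y * (Q + C + Dd) * (Q + C - 2) * Z * W * V \<noteq> 0"
      using hy nz by simp
    show "(P + C + Dd + 1) * (P + C) * Y * (Q + C + Dd) * (Q + C - 1) * Z * (C * W) * V \<noteq> 0"
      using hy nz by simp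
    show "(P + Q + 2 * C + Dd) * (P + C - 1) * (Q + C - 2) * (Dd + 1) \<noteq> 0"
      using hy nz by simp
  qed algebra
qed

definition ratio_col0 :: "real \<Rightarrow> real \<Rightarrow> real \<Rightarrow> real \<Rightarrow> real" where
  "ratio_col0 P Q C Dd = ((P + C + Dd + 1) * (Q + C + Dd) * (C + Dd + 1) * Dd) /
      ((P + Q + 2 * C + Dd) * (P + C + Dd) * (Q + C + Dd - 1) * (Dd + 1))"

lemma double_hook_formula_col0:
  assumes "q \<ge> 2" "p \<ge> q" "d \<ge> 1"
  shows "double_hook_formula p q c (d - 1) =
    double_hook_formula p q c d * ratio_col0 (real p) (real q) (real c) (real d)"
proof -
  have nn: "Suc (p + q + 2 * c + (d - 1)) = p + q + 2 * c + d" using assms by simp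
  have dd: "Suc (c + (d - 1) + 1) = c + d + 1" using assms by simp
  define X where "X = (fact (p + q + 2 * c + (d - 1)) :: real)"
  define Y where "Y = (fact (p - 1) :: real)"
  define Z where "Z = (fact (q - 2) :: real)"
  define W where "W = (fact c :: real)"
  define V where "V = (fact (c + (d - 1) + 1) :: real)"
  define P where "P = real p"
  define Q where "Q = real q"
  define C where "C = real c"
  define Dd where "Dd = real d"
  have n: "fact (p + q + 2 * c + d) = real (p + q + 2 * c + d) * X"
    using fact_Suc[of "p + q + 2 * c + (d - 1)", unfolded nn] unfolding X_def by simp
  have vf: "fact (c + d + 1) = real (c + d + 1) * V"
    unfolding V_def by (rule fact_Suc[of "c + (d - 1) + 1", unfolded dd])
  have nz: "X > 0" "Y > 0" "Z > 0" "W > 0" "V > 0" by (simp_all add: X_def Y_def Z_def W_def V_def)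
  have hy: "Q \<ge> 2" "P \<ge> Q" "C \<ge> 0" "Dd \<ge> 1" using assms by (simp_all add: P_def Q_def C_def Dd_def)
  have cs: "real (p - q + 1) = P - Q + 1" "real (d - 1 + 1) = Dd" "real (p + c + (d - 1) + 1) = P + C + Dd"
    "real (p + c) = P + C" "real (q + c + (d - 1)) = Q + C + Dd - 1" "real (q + c - 1) = Q + C - 1"
    "real (p + q + 2 * c + d) = P + Q + 2 * C + Dd" "real (d + 1) = Dd + 1" "real (p + c + d + 1) = P + C + Dd + 1"
    "real (q + c + d) = Q + C + Dd" "real (c + d + 1) = C + Dd + 1"
    using assms by (simp_all add: P_def Q_def C_def Dd_def of_nat_diff)
  have e1: "double_hook_formula p q c (d - 1) = X * (P - Q + 1) * Dd /
     ((P + C + Dd) * (P + C) * Y * (Q + C + Dd - 1) * (Q + C - 1) * Z * W * V)"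
    unfolding double_hook_formula_def X_def[symmetric] Y_def[symmetric] Z_def[symmetric] W_def[symmetric] V_def[symmetric] cs ..
  have e2: "double_hook_formula p q c d = (P + Q + 2 * C + Dd) * X * (P - Q + 1) * (Dd + 1) /
     ((P + C + Dd + 1) * (P + C) * Y * (Q + C + Dd) * (Q + C - 1) * Z * W * ((C + Dd + 1) * V))"
    unfolding double_hook_formula_def n vf Y_def[symmetric] Z_def[symmetric] W_def[symmetric] cs ..
  show ?thesis unfolding e1 e2 ratio_col0_def P_def[symmetric] Q_def[symmetric] C_def[symmetric] Dd_def[symmetric]
  proof (rule divide_eq_mult_ratio)
    show "(P + C + Dd) * (P + C) * Y * (Q + C + Dd - 1) * (Q + C - 1) * Z * W * V \<noteq> 0"
      using hy nz by simp
    show "(P + C + Dd + 1) * (P + C) * Y * (Q + C + Dd) * (Q + C - 1) * Z * W * ((C + Dd + 1) * V) \<noteq> 0"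
      using hy nz by simp
    show "(P + Q + 2 * C + Dd) * (P + C + Dd) * (Q + C + Dd - 1) * (Dd + 1) \<noteq> 0"
      using hy nz by simp
  qed algebra
qed

definition ratio_row1_hook :: "real \<Rightarrow> real \<Rightarrow> real \<Rightarrow> real" where
  "ratio_row1_hook P Q Dd = ((Q + Dd) * (Q - 1) * (P - Q + 2)) / ((P + Q + Dd) * (Q + Dd - 1) * (P - Q + 1))"

lemma double_hook_formula_to_hook:
  assumes "p \<ge> 2"
  shows "real ((p + d) choose (d + 1)) = double_hook_formula p 2 0 d * ratio_row1_hook (real p) 2 (real d)"
proof -
  have nn: "Suc (Suc (p + d)) = p + 2 + 2 * 0 + d" by simp
  define X where "X = (fact (p + d) :: real)"
  define Y where "Y = (fact (p - 1) :: real)"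
  define V where "V = (fact (d + 1) :: real)"
  define P where "P = real p"
  define Dd where "Dd = real d"
  have n: "fact (p + 2 + 2 * 0 + d) = real (p + d + 2) * (real (p + d + 1) * X)"
    unfolding X_def nn[symmetric] fact_Suc by simp
  have bf: "real ((p + d) choose (d + 1)) = X / (V * Y)"
    unfolding X_def V_def Y_def using binomial_fact[of "d + 1" "p + d", where 'a = real] assms
    by (simp add: add.commute)
  have fs: "fact (2 - 2) = (1::real)" "fact (0 + d + 1) = V" by (simp_all add: V_def)
  have nz: "X > 0" "Y > 0" "V > 0" by (simp_all add: X_def Y_def V_def)
  have hy: "P \<ge> 2" "Dd \<ge> 0" using assms by (simp_all add: P_def Dd_def)
  have cs: "real (p - 2 + 1) = P - 1" "real (d + 1) = Dd + 1" "real (p + 0 + d + 1) = P + Dd + 1"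
    "real (p + 0) = P" "real (2 + 0 + d) = Dd + 2" "real (2 + 0 - 1) = 1"
    "real (p + d + 2) = P + Dd + 2" "real (p + d + 1) = P + Dd + 1"
    using assms by (simp_all add: P_def Dd_def of_nat_diff)
  have e2: "double_hook_formula p 2 0 d = real (p + d + 2) * (real (p + d + 1) * X) * real (p - 2 + 1) * real (d + 1) /
     (real (p + 0 + d + 1) * real (p + 0) * Y * real (2 + 0 + d) * real (2 + 0 - 1) * fact (2 - 2) * fact 0 * fact (0 + d + 1))"
    unfolding double_hook_formula_def n Y_def ..
  have e2': "double_hook_formula p 2 0 d = (P + Dd + 2) * ((P + Dd + 1) * X) * (P - 1) * (Dd + 1) /
     ((P + Dd + 1) * P * Y * (Dd + 2) * 1 * 1 * 1 * V)"
    unfolding e2 cs fs by simp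
  show ?thesis unfolding bf e2' ratio_row1_hook_def P_def[symmetric] Dd_def[symmetric]
  proof (rule divide_eq_mult_ratio)
    show "V * Y \<noteq> 0" using nz by simp
    show "(P + Dd + 1) * P * Y * (Dd + 2) * 1 * 1 * 1 * V \<noteq> 0" using hy nz by simp
    show "(P + 2 + Dd) * (2 + Dd - 1) * (P - 2 + 1) \<noteq> 0" using hy by simp
  qed algebra
qed

lemma sum_of_4_fractions_eq_1:
  fixes x y z w a b c d ka kb kc kd M :: real
  assumes "M \<noteq> 0" "a * ka = M" "b * kb = M" "c * kc = M" "d * kd = M"
    "x * ka + y * kb + z * kc + w * kd = M"
  shows "x/a + y/b + z/c + w/d = 1"
proof -
  have nz: "a \<noteq> 0" "b \<noteq> 0" "c \<noteq> 0" "d \<noteq> 0" "ka \<noteq> 0" "kb \<noteq> 0" "kc \<noteq> 0" "kd \<noteq> 0"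
    using assms by auto
  have "x/a = x * ka / M" "y/b = y * kb / M" "z/c = z * kc / M" "w/d = w * kd / M"
    using assms(2-5) nz by (auto simp: field_simps)
  then have "x/a + y/b + z/c + w/d = (x * ka + y * kb + z * kc + w * kd) / M" by (simp add: add_divide_distrib)
  then show ?thesis using assms by simp
qed

lemma sum_of_3_fractions_eq_1:
  fixes x y w a b d ka kb kd M :: real
  assumes "M \<noteq> 0" "a * ka = M" "b * kb = M" "d * kd = M"
    "x * ka + y * kb + w * kd = M"
  shows "x/a + y/b + w/d = 1"
proof -
  have nz: "a \<noteq> 0" "b \<noteq> 0" "d \<noteq> 0" "ka \<noteq> 0" "kb \<noteq> 0" "kd \<noteq> 0"
    using assms by auto
  have "x/a = x * ka / M" "y/b = y * kb / M" "w/d = w * kd / M"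
    using assms(2-4) nz by (auto simp: field_simps)
  then have "x/a + y/b + w/d = (x * ka + y * kb + w * kd) / M" by (simp add: add_divide_distrib)
  then show ?thesis using assms by simp
qed

lemma ratios_sum_eq_1:
  fixes P Q C Dd :: real
  assumes "Q \<ge> 2" "P \<ge> Q" "C \<ge> 1" "Dd \<ge> 0"
  shows "ratio_row0 P Q C Dd + ratio_row1 P Q C Dd + ratio_col1 P Q C Dd + ratio_col0 P Q C Dd = 1"
  unfolding ratio_row0_def ratio_row1_def ratio_col1_def ratio_col0_def
proof (rule sum_of_4_fractions_eq_1[where ka = "(Q + C + Dd - 1) * (Q + C - 2) * (Dd + 1)"
    and kb = "(P + C + Dd) * (P + C - 1) * (Dd + 1)"
    and kc = "(P + C + Dd) * (P - Q + 1) * (Q + C + Dd - 1)"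
    and kd = "(P + C - 1) * (P - Q + 1) * (Q + C - 2)"])
  show "(P + Q + 2 * C + Dd) *
      ((P + C + Dd) * (P + C - 1) * (P - Q + 1) * (Q + C + Dd - 1) * (Q + C - 2) * (Dd + 1)) \<noteq> 0"
    using assms by simp
qed algebra+

lemma ratios_sum_eq_1_hook:
  fixes P Q Dd :: real
  assumes "Q \<ge> 2" "P \<ge> Q" "Dd \<ge> 0"
  shows "ratio_row0 P Q 0 Dd + ratio_row1_hook P Q Dd + ratio_col0 P Q 0 Dd = 1"
  unfolding ratio_row0_def ratio_row1_hook_def ratio_col0_def
proof (rule sum_of_3_fractions_eq_1[where ka = "(Q + Dd - 1) * (Dd + 1)"
    and kb = "(P + Dd) * (P - 1) * (Dd + 1)"
    and kd = "(P - 1) * (P - Q + 1)"])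
  show "(P + Q + Dd) * ((P + Dd) * (P - 1) * (P - Q + 1) * (Q + Dd - 1) * (Dd + 1)) \<noteq> 0"
    using assms by simp
qed algebra+

lemma ratio_row1_hook_eq:
  assumes "Q \<ge> 3" "P \<ge> Q" "Dd \<ge> 0"
  shows "ratio_row1 P Q 0 Dd = ratio_row1_hook P Q Dd"
proof -
  have nz1: "(P + Q + 2 * 0 + Dd) * (Q - 1 + 0 + Dd) * (Q + 0 - 2) * (P - Q + 1) \<noteq> 0" using assms by simp
  have nz2: "(P + Q + Dd) * (Q + Dd - 1) * (P - Q + 1) \<noteq> 0" using assms by simp
  show ?thesis unfolding ratio_row1_def ratio_row1_hook_def frac_eq_eq[OF nz1 nz2] by algebra
qed

text \<open>For \<open>q = 2\<close> and \<open>c = 0\<close>, removing the corner \<open>(1, 1)\<close> leaves the hook \<open>(p, 1^(d+1))\<close>,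
  whence the binomial coefficient.\<close>

lemma double_hook_formula_recurrence:
  assumes "q \<ge> 2" "p \<ge> q"
  shows "double_hook_formula p q c d =
      (if p > q then double_hook_formula (p - 1) q c d else 0)
    + (if q > 2 then double_hook_formula p (q - 1) c d
       else if c = 0 then real ((p + d) choose (d + 1)) else 0)
    + (if c > 0 then double_hook_formula p q (c - 1) (d + 1) else 0)
    + (if d > 0 then double_hook_formula p q c (d - 1) else 0)"
proof -
  define P Q C Dd where "P = real p" and "Q = real q" and "C = real c" and "Dd = real d"
  let ?G = "double_hook_formula p q c d"
  have PQ: "Q \<ge> 2" "P \<ge> Q" "C \<ge> 0" "Dd \<ge> 0"
    using assms by (simp_all add: P_def Q_def C_def Dd_def)
  have row0: "(if p > q then double_hook_formula (p - 1) q c d else 0) = ?G * ratio_row0 P Q C Dd"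
    using assms double_hook_formula_row0[of q p c d]
    by (auto simp: P_def Q_def C_def Dd_def ratio_row0_def)
  have col0: "(if d > 0 then double_hook_formula p q c (d - 1) else 0) = ?G * ratio_col0 P Q C Dd"
    using assms double_hook_formula_col0[of q p d c]
    by (auto simp: P_def Q_def C_def Dd_def ratio_col0_def)
  show ?thesis
  proof (cases "c > 0")
    case True
    have col1: "(if c > 0 then double_hook_formula p q (c - 1) (d + 1) else 0) = ?G * ratio_col1 P Q C Dd"
      using assms True double_hook_formula_col1[of q p c d] by (simp add: P_def Q_def C_def Dd_def)
    have row1: "(if q > 2 then double_hook_formula p (q - 1) c d
        else if c = 0 then real ((p + d) choose (d + 1)) else 0) = ?G * ratio_row1 P Q C Dd"
      using assms True double_hook_formula_row1[of q p c d]
      by (auto simp: P_def Q_def C_def Dd_def ratio_row1_def)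
    have "C \<ge> 1"
      using True by (simp add: C_def)
    then show ?thesis
      unfolding row0 row1 col1 col0 using ratios_sum_eq_1[of Q P C Dd] PQ
      by (simp flip: distrib_left)
  next
    case False
    have row1: "(if q > 2 then double_hook_formula p (q - 1) c d
        else if c = 0 then real ((p + d) choose (d + 1)) else 0) = ?G * ratio_row1_hook P Q Dd"
    proof (cases "q > 2")
      case True
      then show ?thesis
        using assms False double_hook_formula_row1[of q p c d] ratio_row1_hook_eq[of Q P Dd] PQ
        by (simp add: P_def Q_def C_def Dd_def)
    next
      case False
      with \<open>\<not> c > 0\<close> assms show ?thesis
        using double_hook_formula_to_hook[of p d] by (simp add: P_def Q_def Dd_def)
    qed
    show ?thesis
      unfolding row0 row1 col0 using False ratios_sum_eq_1_hook[of Q P Dd] PQ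
      by (simp add: C_def flip: distrib_left)
  qed
qed

lemma sum_cond_singletons:
  assumes "Pa \<Longrightarrow> Pb \<Longrightarrow> a1 \<noteq> a2" "Pa \<Longrightarrow> Pc \<Longrightarrow> a1 \<noteq> a3"
    "Pa \<Longrightarrow> Pd \<Longrightarrow> a1 \<noteq> a4" "Pb \<Longrightarrow> Pc \<Longrightarrow> a2 \<noteq> a3"
    "Pb \<Longrightarrow> Pd \<Longrightarrow> a2 \<noteq> a4" "Pc \<Longrightarrow> Pd \<Longrightarrow> a3 \<noteq> a4"
  shows "sum f ((if Pa then {a1} else {}) \<union> (if Pb then {a2} else {}) \<union>
      (if Pc then {a3} else {}) \<union> (if Pd then {a4} else {})) =
    (if Pa then f a1 else 0) + (if Pb then f a2 else 0) + (if Pc then f a3 else 0) +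
    (if Pd then f a4 else 0)"
  using assms by (cases Pa; cases Pb; cases Pc; cases Pd) (auto simp: insert_commute add.assoc)

theorem card_tableaux_double_hook:
  "q \<ge> 2 \<Longrightarrow> p \<ge> q \<Longrightarrow>
    real (card (tableaux (double_hook_cells p q c d))) = double_hook_formula p q c d"
proof (induction "p + q + 2 * c + d" arbitrary: p q c d rule: less_induct)
  case less
  let ?D = "double_hook_cells p q c d"
  let ?N = "\<lambda>x. real (card (tableaux (?D - {x})))"
  have "(0, 0) \<in> ?D"
    using less.prems by (intro zero_in_double_hook_cells) simp
  then have "real (card (tableaux ?D)) = (\<Sum>x\<in>corners ?D. ?N x)"
    using card_tableaux_branching[OF finite_double_hook_cells down_closed_double_hook_cells[OF less.prems]]
    by (metis empty_iff of_nat_sum)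
  also have "\<dots> = (if p > q then ?N (0, p - 1) else 0) + (if q > 2 \<or> c = 0 then ?N (1, q - 1) else 0)
      + (if c > 0 then ?N (c + 1, 1) else 0) + (if d > 0 then ?N (c + d + 1, 0) else 0)"
    unfolding corners_double_hook_cells[OF less.prems] by (rule sum_cond_singletons) auto
  also have "\<dots> = (if p > q then double_hook_formula (p - 1) q c d else 0)
    + (if q > 2 then double_hook_formula p (q - 1) c d
       else if c = 0 then real ((p + d) choose (d + 1)) else 0)
    + (if c > 0 then double_hook_formula p q (c - 1) (d + 1) else 0)
    + (if d > 0 then double_hook_formula p q c (d - 1) else 0)"
    using less.prems less.hyps[of "p - 1" q c d] less.hyps[of p "q - 1" c d]
      less.hyps[of p q "c - 1" "d + 1"] less.hyps[of p q c "d - 1"]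
      double_hook_cells_remove_row0 double_hook_cells_remove_row1 double_hook_cells_remove_col1
      double_hook_cells_remove_col0 double_hook_cells_remove_row1_hook card_tableaux_hook[of p "d + 1"]
    by auto
  also have "\<dots> = double_hook_formula p q c d"
    by (rule double_hook_formula_recurrence[symmetric]) (use less.prems in auto)
  finally show ?case .
qed

lemma cells_Nil: "cells [] = {}"
  by (simp add: cells_def)

lemma cells_Cons: "cells (a # l) = Pair 0 ` {..<a} \<union> (\<lambda>(i, j). (Suc i, j)) ` cells l"
  unfolding cells_def by (force simp: nth_Cons split: nat.splits)

lemma finite_cells: "finite (cells l)"
  by (induction l) (simp_all add: cells_Nil cells_Cons)

lemma card_cells: "card (cells l) = sum_list l"
proof (induction l)
  case Nil
  then show ?case by (simp add: cells_Nil)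
next
  case (Cons a l)
  have "inj_on (\<lambda>(i, j). (Suc i, j)) (cells l)"
    by (auto simp: inj_on_def)
  then have "card (Pair 0 ` {..<a} \<union> (\<lambda>(i, j). (Suc i, j)) ` cells l) = a + card (cells l)"
    by (subst card_Un_disjoint) (auto simp: finite_cells card_image inj_on_def)
  with Cons.IH show ?case
    by (simp add: cells_Cons)
qed

lemma f_syt_eq_card_tableaux: "f_syt lam = card (tableaux (cells lam))"
  unfolding f_syt_def SYT_def tableaux_def card_cells ..

lemma cells_hook_shape: "cells (p # replicate e 1) = hook_cells p e"
  unfolding cells_def hook_cells_def by (force simp: nth_Cons split: nat.splits)

lemma cells_double_hook_shape:
  "cells (p # q # (replicate c 2 @ replicate d 1)) = double_hook_cells p q c d"
proof (rule set_eqI)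
  fix x :: "nat \<times> nat"
  obtain i j where x: "x = (i, j)"
    by (cases x)
  show "x \<in> cells (p # q # (replicate c 2 @ replicate d 1)) \<longleftrightarrow> x \<in> double_hook_cells p q c d"
  proof (cases "i \<ge> 2")
    case True
    then obtain k where k: "i = Suc (Suc k)"
      by (metis add_2_eq_Suc le_Suc_ex)
    have "x \<in> cells (p # q # (replicate c 2 @ replicate d 1)) \<longleftrightarrow>
        k < c + d \<and> j < (replicate c (2::nat) @ replicate d 1) ! k"
      unfolding x k cells_def by simp
    also have "\<dots> \<longleftrightarrow> k < c + d \<and> j < (if k < c then 2 else 1)"
      by (auto simp: nth_append)
    also have "\<dots> \<longleftrightarrow> x \<in> double_hook_cells p q c d"
      unfolding x k double_hook_cells_def by auto
    finally show ?thesis .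
  next
    case False
    then have "i = 0 \<or> i = 1"
      by auto
    then show ?thesis
      unfolding x cells_def double_hook_cells_def by auto
  qed
qed

lemma H_Nil: "H [] = {}"
  by (simp add: H_def)

lemma H_Cons: "H (a # l) = insert (a + length l) (H l)"
proof (rule set_eqI)
  fix x
  show "x \<in> H (a # l) \<longleftrightarrow> x \<in> insert (a + length l) (H l)"
  proof
    assume "x \<in> H (a # l)"
    then obtain i where i: "i < Suc (length l)" "x = (a # l) ! i + Suc (length l) - 1 - i"
      by (auto simp: H_def)
    show "x \<in> insert (a + length l) (H l)"
    proof (cases i)
      case 0
      then show ?thesis using i by simp
    next
      case (Suc i')
      then have "x = l ! i' + length l - 1 - i'" "i' < length l"
        using i by auto
      then show ?thesis
        by (auto simp: H_def)
    qed
  next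
    assume "x \<in> insert (a + length l) (H l)"
    then show "x \<in> H (a # l)"
    proof
      assume "x = a + length l"
      then have "x = (a # l) ! 0 + length (a # l) - 1 - 0"
        by simp
      then show ?thesis
        unfolding H_def by blast
    next
      assume "x \<in> H l"
      then obtain i where i: "i < length l" "x = l ! i + length l - 1 - i"
        by (auto simp: H_def)
      then have "x = (a # l) ! Suc i + length (a # l) - 1 - Suc i" "Suc i < length (a # l)"
        by auto
      then show ?thesis
        unfolding H_def by blast
    qed
  qed
qed

lemma finite_H: "finite (H l)"
  by (induction l) (simp_all add: H_Nil H_Cons)

lemma is_partition_ConsD: "is_partition (a # l) \<Longrightarrow> is_partition l"
  unfolding is_partition_def by simp

lemma H_less_head: "is_partition (a # l) \<Longrightarrow> x \<in> H l \<Longrightarrow> x < a + length l"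
proof (induction l arbitrary: a x)
  case Nil
  then show ?case by (simp add: H_Nil)
next
  case (Cons b l)
  have "b \<le> a"
    using Cons.prems(1) by (simp add: is_partition_def)
  moreover have "x = b + length l \<or> x < b + length l"
    using Cons.prems(2) Cons.IH[OF is_partition_ConsD[OF Cons.prems(1)]] by (auto simp: H_Cons)
  ultimately show ?case
    by auto
qed

lemma Max_H_Cons: "is_partition (a # l) \<Longrightarrow> Max (H (a # l)) = a + length l"
  by (rule Max_eqI) (auto simp: finite_H H_Cons dest: H_less_head)

lemma H_eq_H_Cons_Diff: "is_partition (a # l) \<Longrightarrow> H l = H (a # l) - {a + length l}"
  by (auto simp: H_Cons dest: H_less_head)

lemma partition_eq_if_H_eq: "is_partition l \<Longrightarrow> is_partition m \<Longrightarrow> H l = H m \<Longrightarrow> l = m"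
proof (induction l arbitrary: m)
  case Nil
  then show ?case by (cases m) (auto simp: H_Nil H_Cons)
next
  case (Cons a l)
  then obtain b m' where m: "m = b # m'"
    by (cases m) (auto simp: H_Nil H_Cons)
  have "a + length l = b + length m'"
    using Max_H_Cons[OF Cons.prems(1)] Max_H_Cons[of b m'] Cons.prems(2,3) m by simp
  moreover have "H l = H m'"
    using H_eq_H_Cons_Diff[OF Cons.prems(1)] H_eq_H_Cons_Diff[of b m'] Cons.prems(2,3) m calculation
    by simp
  moreover have "l = m'"
    using Cons.IH[of m'] Cons.prems(1,2) m calculation(2) by (auto dest: is_partition_ConsD)
  ultimately show ?case
    using m by simp
qed

lemma H_replicate_1: "H (replicate d (1::nat)) = {1..d}"
  by (induction d) (auto simp: H_Nil H_Cons)

lemma H_replicate_2_append: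
  "H (replicate c (2::nat) @ ys) = {length ys + 2 .. length ys + c + 1} \<union> H ys"
  by (induction c) (auto simp: H_Cons)

lemma sorted_wrt_replicate: "R x x \<Longrightarrow> sorted_wrt R (replicate n x)"
  by (induction n) auto

lemma is_partition_hook_shape: "p \<ge> 1 \<Longrightarrow> is_partition (p # replicate e (1::nat))"
  unfolding is_partition_def by (auto intro: sorted_wrt_replicate)

lemma is_partition_double_hook_shape:
  "q \<ge> 2 \<Longrightarrow> p \<ge> q \<Longrightarrow> is_partition (p # q # (replicate c (2::nat) @ replicate d 1))"
  unfolding is_partition_def by (auto simp: sorted_wrt_append intro: sorted_wrt_replicate)

section \<open>The sign \<open>Od\<close>\<close>

lemma two_power_times_odd:
  assumes "n > 0"
  obtains s u where "n = 2 ^ s * u" "odd (u :: nat)"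
proof -
  obtain u where "n = 2 ^ multiplicity 2 n * u" "odd u"
    using multiplicity_decompose'[of n 2] assms by auto
  then show ?thesis
    using that by blast
qed
lemma odd_part_two_power_mult: "odd u \<Longrightarrow> odd_part (2 ^ s * u) = u"
proof -
  assume "odd u"
  then have "multiplicity 2 (2 ^ s * u) = s"
    by (simp add: prime_elem_multiplicity_mult_distrib not_dvd_imp_multiplicity_0 odd_pos)
  then show ?thesis
    by (simp add: odd_part_def)
qed

lemma Od_two_power_mult: "odd u \<Longrightarrow> Od (2 ^ s * u) = (if u mod 4 = 1 then 1 else -1)"
  by (simp add: Od_def odd_part_two_power_mult)

lemma Od_square: "Od n * Od n = 1"
  by (simp add: Od_def)

lemma odd_mod_4_cases: "odd (u :: nat) \<Longrightarrow> u mod 4 = 1 \<or> u mod 4 = 3"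
  by presburger

lemma Od_mult:
  assumes "m > 0" "n > 0"
  shows "Od (m * n) = Od m * Od n"
proof -
  obtain s u where m: "m = 2 ^ s * u" "odd u"
    using two_power_times_odd assms(1) by blast
  obtain s' u' where n: "n = 2 ^ s' * u'" "odd u'"
    using two_power_times_odd assms(2) by blast
  have "Od (m * n) = Od (2 ^ (s + s') * (u * u'))"
    unfolding m n by (simp add: power_add ac_simps)
  also have "\<dots> = (if (u mod 4) * (u' mod 4) mod 4 = 1 then 1 else -1)"
    using m n by (simp add: Od_two_power_mult mod_mult_eq)
  moreover have "Od m = (if u mod 4 = 1 then 1 else -1)" "Od n = (if u' mod 4 = 1 then 1 else -1)"
    using m n by (simp_all add: Od_two_power_mult)
  ultimately show ?thesis
    using odd_mod_4_cases[OF m(2)] odd_mod_4_cases[OF n(2)] by (elim disjE) simp_all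
qed

lemma two_power_split_below:
  assumes "a > 0" "a < (2::nat) ^ r"
  obtains s u k :: nat where "a = 2 ^ s * u" "odd u" "2 ^ (r + 1) = 2 ^ s * (4 * k)" "u < 2 * k"
proof -
  obtain s u where a: "a = 2 ^ s * u" "odd u"
    using two_power_times_odd assms(1) by blast
  have "s < r"
  proof (rule ccontr)
    assume "\<not> s < r"
    then have "(2::nat) ^ r \<le> 2 ^ s"
      by (simp add: power_increasing)
    also have "\<dots> \<le> 2 ^ s * u"
      using odd_pos[OF a(2)] by simp
    finally have "(2::nat) ^ r \<le> 2 ^ s * u" .
    with assms(2) a(1) show False
      by simp
  qed
  define k :: nat where "k = 2 ^ (r - 1 - s)"
  have "(2::nat) ^ (r + 1) = 2 ^ (s + 2 + (r - 1 - s))" "(2::nat) ^ r = 2 ^ (s + 1 + (r - 1 - s))"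
    using \<open>s < r\<close> by (auto intro!: arg_cong[where f = "(^) 2"])
  then have "(2::nat) ^ (r + 1) = 2 ^ s * (4 * k)" "(2::nat) ^ r = 2 ^ s * (2 * k)"
    unfolding k_def by (simp_all add: power_add)
  moreover from this assms(2) a(1) have "u < 2 * k"
    by simp
  ultimately show ?thesis
    using that a by blast
qed

lemma odd_four_times_minus:
  assumes "odd (u :: nat)" "u < 4 * m"
  shows "odd (4 * m - u) \<and> ((4 * m - u) mod 4 = 1 \<longleftrightarrow> u mod 4 = 3)"
proof -
  have "u div 4 < m"
    using assms(2) by (simp add: less_mult_imp_div_less mult.commute)
  moreover have "u = 4 * (u div 4) + u mod 4"
    by simp
  ultimately have "4 * m - u = 4 * (m - u div 4 - 1) + (4 - u mod 4)"
    using odd_mod_4_cases[OF assms(1)] by linarith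
  with odd_mod_4_cases[OF assms(1)] show ?thesis
    by (elim disjE) simp_all
qed

lemma Od_add_two_power:
  assumes "a > 0" "a < 2 ^ r"
  shows "Od (a + 2 ^ (r + 1) * t) = Od a"
proof -
  obtain s u k :: nat where a: "a = 2 ^ s * u" "odd u" and r: "2 ^ (r + 1) = 2 ^ s * (4 * k)"
    using two_power_split_below[OF assms(1,2)] by blast
  have "a + 2 ^ (r + 1) * t = 2 ^ s * (u + 4 * (k * t))"
    unfolding a(1) r by (simp add: algebra_simps)
  then have "Od (a + 2 ^ (r + 1) * t) = (if u mod 4 = 1 then 1 else -1)"
    using a(2) by (simp add: Od_two_power_mult)
  moreover have "Od a = (if u mod 4 = 1 then 1 else -1)"
    unfolding a(1) using a(2) by (rule Od_two_power_mult)
  ultimately show ?thesis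
    by simp
qed

lemma Od_two_power_minus:
  assumes "a > 0" "a < 2 ^ r" "t \<ge> 1"
  shows "Od (2 ^ (r + 1) * t - a) = - Od a"
proof -
  obtain s u k :: nat where a: "a = 2 ^ s * u" "odd u" and r: "2 ^ (r + 1) = 2 ^ s * (4 * k)"
    and "u < 2 * k"
    using two_power_split_below[OF assms(1,2)] by blast
  then have "u < 4 * (k * t)"
    using assms(3) by (simp add: less_le_trans)
  note v = odd_four_times_minus[OF a(2) this]
  have "2 ^ (r + 1) * t - a = 2 ^ s * (4 * (k * t) - u)"
    unfolding a(1) r by (simp add: algebra_simps diff_mult_distrib2)
  then have "Od (2 ^ (r + 1) * t - a) = (if u mod 4 = 3 then 1 else -1)"
    using v by (simp add: Od_two_power_mult)
  moreover have "Od a = (if u mod 4 = 1 then 1 else -1)"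
    unfolding a(1) using a(2) by (rule Od_two_power_mult)
  ultimately show ?thesis
    using odd_mod_4_cases[OF a(2)] by (elim disjE) simp_all
qed

lemma Od_mult_eq:
  "a * b = c * d \<Longrightarrow> a > 0 \<Longrightarrow> b > 0 \<Longrightarrow> c > 0 \<Longrightarrow> d > 0 \<Longrightarrow>
    Od a * Od b = Od c * Od d"
  using Od_mult[of a b] Od_mult[of c d] by simp

lemma Od_mult_cancel: "Od c * x = Od c * y \<Longrightarrow> x = y"
proof -
  assume "Od c * x = Od c * y"
  then have "(Od c * Od c) * x = (Od c * Od c) * y"
    by (simp add: mult.assoc)
  then show "x = y"
    by (simp add: Od_square)
qed

lemma Od_1: "Od 1 = 1"
  using Od_two_power_mult[of 1 0] by simp

lemma Od_binomial_double_pred: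
  "m < 2 ^ r \<Longrightarrow> Od ((2 * 2 ^ r - 1) choose m) = (-1) ^ m"
proof (induction m)
  case 0
  show ?case using Od_1 by simp
next
  case (Suc m)
  let ?n = "2 * 2 ^ r - 1 :: nat"
  have "Suc m * (?n choose Suc m) = (?n - m) * (?n choose m)"
    using binomial_absorption[of m ?n] binomial_absorb_comp[of ?n m] by simp
  moreover have "Suc m \<le> ?n"
    using Suc.prems by simp
  ultimately have "Od (Suc m) * Od (?n choose Suc m) = Od (?n - m) * Od (?n choose m)"
    by (intro Od_mult_eq) simp_all
  moreover have "Od (2 ^ (r + 1) * 1 - Suc m) = - Od (Suc m)"
    using Suc.prems by (intro Od_two_power_minus) simp_all
  then have "Od (?n - m) = - Od (Suc m)"
    by simp
  ultimately have "Od (Suc m) * Od (?n choose Suc m) = Od (Suc m) * (- Od (?n choose m))"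
    by simp
  then have "Od (?n choose Suc m) = - Od (?n choose m)"
    by (rule Od_mult_cancel)
  with Suc show ?case
    by simp
qed

lemma Od_binomial_add_double:
  "m < 2 ^ r \<Longrightarrow> Od ((2 * 2 ^ r + m) choose m) = 1"
proof (induction m)
  case 0
  show ?case using Od_1 by simp
next
  case (Suc m)
  let ?n = "2 * 2 ^ r + m :: nat"
  have "Od (Suc ?n) * Od (?n choose m) = Od (Suc ?n choose Suc m) * Od (Suc m)"
    using Suc_times_binomial_eq[of ?n m] by (intro Od_mult_eq) auto
  moreover have "Od (Suc ?n) = Od (Suc m)"
    using Od_add_two_power[of "Suc m" r 1] Suc.prems by (simp add: add.commute)
  ultimately have "Od (Suc m) * Od (Suc ?n choose Suc m) = Od (Suc m) * Od (?n choose m)"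
    by (metis mult.commute)
  then have "Od (Suc ?n choose Suc m) = Od (?n choose m)"
    by (rule Od_mult_cancel)
  with Suc show ?case
    by simp
qed

lemma Od_binomial_triple: "Od ((3 * 2 ^ r) choose 2 ^ r) = -1"
proof -
  define N :: nat where "N = 2 ^ r"
  have "Suc (2 * N + (N - 1)) = 3 * N" "Suc (N - 1) = N"
    by (simp_all add: N_def)
  then have "Od (3 * N) * Od ((2 * N + (N - 1)) choose (N - 1)) = Od ((3 * N) choose N) * Od N"
    using Suc_times_binomial_eq[of "2 * N + (N - 1)" "N - 1"] by (intro Od_mult_eq) (auto simp: N_def)
  moreover have "Od ((2 * N + (N - 1)) choose (N - 1)) = 1"
    unfolding N_def by (rule Od_binomial_add_double) simp
  moreover have "Od (3 * N) = -1" "Od N = 1"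
    using Od_two_power_mult[of 3 r] Od_two_power_mult[of 1 r] by (simp_all add: N_def mult.commute)
  ultimately show ?thesis
    by (simp add: N_def)
qed

lemma Od_binomial_triple_pred:
  "m < 2 ^ r \<Longrightarrow> Od ((3 * 2 ^ r - 1) choose m) = Od ((2 ^ r - 1) choose m)"
proof (induction m)
  case 0
  show ?case by simp
next
  case (Suc m)
  let ?n = "3 * 2 ^ r - 1 :: nat" and ?k = "2 ^ r - 1 :: nat"
  have "Suc m * (?n choose Suc m) = (?n - m) * (?n choose m)"
    "Suc m * (?k choose Suc m) = (?k - m) * (?k choose m)"
    using binomial_absorption[of m ?n] binomial_absorb_comp[of ?n m]
      binomial_absorption[of m ?k] binomial_absorb_comp[of ?k m] by simp_all
  then have "Od (Suc m) * Od (?n choose Suc m) = Od (?n - m) * Od (?n choose m)"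
    "Od (Suc m) * Od (?k choose Suc m) = Od (?k - m) * Od (?k choose m)"
    using Suc.prems by (auto intro!: Od_mult_eq)
  moreover have "?n - m = (?k - m) + 2 ^ (r + 1) * 1"
    using Suc.prems by simp
  then have "Od (?n - m) = Od (?k - m)"
    using Od_add_two_power[of "?k - m" r 1] Suc.prems by simp
  ultimately have "Od (Suc m) * Od (?n choose Suc m) = Od (Suc m) * Od (?k choose Suc m)"
    using Suc by simp
  then show ?case
    by (rule Od_mult_cancel)
qed

section \<open>Type I parents of a hook\<close>

text \<open>For the \<open>j\<close>-th parent the hook length formula factors into binomial coefficients
  whose \<open>Od\<close> is known, times small factors whose \<open>Od\<close> agree in pairs up to sign.\<close>

lemma double_hook_formula_factorization:
  fixes N b j :: nat
  assumes jb: "1 \<le> j" "j \<le> b" and bN: "b < N"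
  defines "p \<equiv> j + 2 * N - b" and "q \<equiv> N - b + 1" and "c \<equiv> b - j" and "d \<equiv> j - 1"
  shows "double_hook_formula p q c d * (real (2 * N + j) * real (N - j)) =
    real ((N - 1) choose b) * real ((2 * N - 1) choose (b - j)) * real ((3 * N) choose N) *
    real (N + j) * real j"
proof -
  have shape: "p + q + 2 * c + d = 3 * N" "p - q + 1 = N + j" "d + 1 = j"
    "p + c + d + 1 = 2 * N + j" "p + c = 2 * N" "p - 1 = 2 * N - b + j - 1" "q + c + d = N"
    "q + c - 1 = N - j" "q - 2 = N - b - 1" "c + d + 1 = b" "2 * N + d + 1 = 2 * N + j"
    using assms by auto
  define X3 where "X3 = (fact (3 * N) :: real)"
  define Yp where "Yp = (fact (2 * N - b + j - 1) :: real)"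
  define Zq where "Zq = (fact (N - b - 1) :: real)"
  define Wc where "Wc = (fact c :: real)"
  define Bf where "Bf = (fact b :: real)"
  define F1 where "F1 = (fact (N - 1) :: real)"
  define F2 where "F2 = (fact (2 * N - 1) :: real)"
  define NN where "NN = real N"
  define J where "J = real j"
  have pos: "X3 > 0" "Yp > 0" "Zq > 0" "Wc > 0" "Bf > 0" "F1 > 0" "F2 > 0"
    by (simp_all add: X3_def Yp_def Zq_def Wc_def Bf_def F1_def F2_def)
  have hy: "J > 0" "NN > J" using assms by (simp_all add: NN_def J_def)
  have cs: "real (N + j) = NN + J" "real (2 * N + j) = 2 * NN + J" "real (2 * N) = 2 * NN"
    "real (N - j) = NN - J" "real j = J" "real N = NN"
    using assms by (simp_all add: NN_def J_def of_nat_diff)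
  have eG: "double_hook_formula p q c d =
      X3 * (NN + J) * J / ((2 * NN + J) * (2 * NN) * Yp * NN * (NN - J) * Zq * Wc * Bf)"
    unfolding double_hook_formula_def shape X3_def Yp_def Zq_def Wc_def Bf_def cs ..
  have fN: "fact N = NN * F1" unfolding F1_def NN_def using fact_reduce[of N] bN by simp
  have f2N: "fact (2 * N) = 2 * NN * F2" unfolding F2_def NN_def using fact_reduce[of "2 * N"] bN by simp
  have b1: "real ((N - 1) choose b) = F1 / (Bf * Zq)"
    unfolding F1_def Bf_def Zq_def using binomial_fact[of b "N - 1", where 'a = real] bN
    by (simp add: diff_diff_add add.commute)
  have b2: "real ((2 * N - 1) choose (b - j)) = F2 / (Wc * Yp)"
  proof -
    have "2 * N - 1 - (b - j) = 2 * N - b + j - 1" using assms by simp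
    then show ?thesis
      unfolding F2_def Wc_def Yp_def c_def
      using binomial_fact[of "b - j" "2 * N - 1", where 'a = real] assms by simp
  qed
  have b3: "real ((3 * N) choose N) = X3 / ((NN * F1) * (2 * NN * F2))"
  proof -
    have "3 * N - N = 2 * N" by simp
    then show ?thesis
      unfolding X3_def fN[symmetric] f2N[symmetric]
      using binomial_fact[of N "3 * N", where 'a = real] by simp
  qed
  have "(2 * NN + J) * (2 * NN) * Yp * NN * (NN - J) * Zq * Wc * Bf \<noteq> 0"
    "Bf * Zq * (Wc * Yp) * (NN * F1 * (2 * NN * F2)) \<noteq> 0"
    using pos hy by simp_all
  then show ?thesis
    unfolding eG b1 b2 b3 cs by (simp add: field_simps)
qed

lemma Od_card_tableaux_double_hook_parent:
  assumes "1 \<le> j" "j \<le> b" "b < 2 ^ r"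
  shows "Od (card (tableaux (double_hook_cells (j + 2 * 2 ^ r - b) (2 ^ r - b + 1) (b - j) (j - 1))))
     = (-1) ^ (b - j) * Od ((2 ^ r - 1) choose b)"
proof -
  define N :: nat where "N = 2 ^ r"
  define F where "F = card (tableaux (double_hook_cells (j + 2 * N - b) (N - b + 1) (b - j) (j - 1)))"
  have bN: "b < N"
    using assms(3) by (simp add: N_def)
  have "real F = double_hook_formula (j + 2 * N - b) (N - b + 1) (b - j) (j - 1)"
    unfolding F_def using assms bN by (intro card_tableaux_double_hook) auto
  then have "real (F * (2 * N + j) * (N - j)) =
      real (((N - 1) choose b) * ((2 * N - 1) choose (b - j)) * ((3 * N) choose N) * (N + j) * j)"
    using double_hook_formula_factorization[OF assms(1,2) bN] by simp
  then have eq: "F * (2 * N + j) * (N - j) =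
      ((N - 1) choose b) * ((2 * N - 1) choose (b - j)) * ((3 * N) choose N) * (N + j) * j"
    by (simp only: of_nat_eq_iff)
  have pos: "((N - 1) choose b) > 0" "((2 * N - 1) choose (b - j)) > 0" "((3 * N) choose N) > 0"
    "N + j > 0" "j > 0" "2 * N + j > 0" "N - j > 0"
    using assms bN by auto
  then have "F > 0"
    using eq by (metis mult_eq_0_iff neq0_conv)
  with eq pos have "Od F * Od (2 * N + j) * Od (N - j) =
      Od ((N - 1) choose b) * Od ((2 * N - 1) choose (b - j)) * Od ((3 * N) choose N) * Od (N + j) * Od j"
    by (metis Od_mult mult_pos_pos)
  moreover have "Od (2 * N + j) = Od j"
    using Od_add_two_power[of j r 1] assms by (simp add: N_def add.commute)
  moreover have "Od (N + j) = - Od (N - j)"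
    using Od_two_power_minus[of "N - j" r 1] assms by (simp add: N_def)
  moreover have "Od ((2 * N - 1) choose (b - j)) = (-1) ^ (b - j)"
    unfolding N_def using assms by (intro Od_binomial_double_pred) auto
  moreover have "Od ((3 * N) choose N) = -1"
    unfolding N_def by (rule Od_binomial_triple)
  ultimately have "Od j * (Od (N - j) * Od F) = Od j * (Od (N - j) * ((-1) ^ (b - j) * Od ((N - 1) choose b)))"
    by (simp add: algebra_simps)
  then have "Od (N - j) * Od F = Od (N - j) * ((-1) ^ (b - j) * Od ((N - 1) choose b))"
    by (rule Od_mult_cancel)
  then have "Od F = (-1) ^ (b - j) * Od ((N - 1) choose b)"
    by (rule Od_mult_cancel)
  then show ?thesis
    unfolding F_def N_def .
qed

lemma sum_alternating_signs: "(\<Sum>x\<in>{1..b}. (-1::int) ^ (b - x)) = (if even b then 0 else 1)"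
proof (induction b)
  case 0
  show ?case by simp
next
  case (Suc b)
  have "(\<Sum>x\<in>{1..Suc b}. (-1::int) ^ (Suc b - x)) = 1 + (\<Sum>x\<in>{1..b}. (-1::int) ^ (Suc b - x))"
    by (simp add: add.commute)
  also have "(\<Sum>x\<in>{1..b}. (-1::int) ^ (Suc b - x)) = - (\<Sum>x\<in>{1..b}. (-1::int) ^ (b - x))"
    by (simp add: Suc_diff_le sum_negf[symmetric])
  finally show ?case
    using Suc.IH by simp
qed

lemma f_syt_hook_shape: "p \<ge> 1 \<Longrightarrow> f_syt (p # replicate e 1) = (p + e - 1) choose e"
  unfolding f_syt_eq_card_tableaux cells_hook_shape by (rule card_tableaux_hook)

lemma hook_shape_if_H_eq:
  assumes "is_partition mu" "H mu = insert N {1..b}" "b < N"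
  shows "mu = (N - b) # replicate b 1"
proof (rule partition_eq_if_H_eq[OF assms(1) is_partition_hook_shape])
  show "H mu = H ((N - b) # replicate b 1)"
    unfolding H_Cons H_replicate_1 using assms(2,3) by simp
qed (use assms(3) in simp)

text \<open>The Type I \<open>2N\<close>-parent of the hook \<open>(N - b, 1^b)\<close> moving its first-column hook length
  \<open>x \<in> {N} \<union> {1..b}\<close> to \<open>x + 2N\<close> (see \<open>H_hook_parent\<close>).\<close>

definition hook_parent :: "nat \<Rightarrow> nat \<Rightarrow> nat \<Rightarrow> nat list" where
  "hook_parent N b x = (if x = N then (3 * N - b) # replicate b 1
     else (x + 2 * N - b) # (N - b + 1) # (replicate (b - x) 2 @ replicate (x - 1) 1))"

lemma H_double_hook_shape:
  assumes "1 \<le> x" "x \<le> b" "b < N"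
  shows "H ((x + 2 * N - b) # (N - b + 1) # (replicate (b - x) 2 @ replicate (x - 1) 1))
    = insert (x + 2 * N) (insert N ({1..b} - {x}))"
proof -
  have "length (replicate (b - x) (2::nat) @ replicate (x - 1) 1) = b - 1"
    "x + 2 * N - b + Suc (b - 1) = x + 2 * N" "N - b + 1 + (b - 1) = N"
    "{x - 1 + 2..x - 1 + (b - x) + 1} \<union> {1..x - 1} = {1..b} - {x}"
    using assms by auto
  then show ?thesis
    by (simp only: H_Cons H_replicate_2_append H_replicate_1 length_Cons length_replicate)
qed

lemma is_partition_hook_parent:
  assumes "b < N" "x \<in> insert N {1..b}"
  shows "is_partition (hook_parent N b x)"
proof (cases "x = N")
  case True
  with assms(1) show ?thesis
    using is_partition_hook_shape[of "3 * N - b" b] by (simp add: hook_parent_def)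
next
  case False
  with assms show ?thesis
    using is_partition_double_hook_shape[of "N - b + 1" "x + 2 * N - b" "b - x" "x - 1"]
    by (auto simp: hook_parent_def)
qed

lemma H_hook_parent:
  assumes "b < N" "x \<in> insert N {1..b}"
  shows "H (hook_parent N b x) = insert (x + 2 * N) (insert N {1..b}) - {x}"
proof (cases "x = N")
  case True
  have "H ((3 * N - b) # replicate b 1) = insert (3 * N) {1..b}"
    unfolding H_Cons H_replicate_1 using assms(1) by simp
  with True assms(1) show ?thesis
    by (auto simp: hook_parent_def)
next
  case False
  with assms show ?thesis
    using H_double_hook_shape[of x b N] by (auto simp: hook_parent_def)
qed

lemma P1_hook_eq:
  assumes "2 ^ R = 2 * N" "b < N" "H mu = insert N {1..b}"
  shows "P1 R mu = hook_parent N b ` H mu"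
proof
  show "P1 R mu \<subseteq> hook_parent N b ` H mu"
  proof
    fix lam assume "lam \<in> P1 R mu"
    then obtain x where lam: "is_partition lam" "x \<in> H mu" "H lam = (H mu \<union> {x + 2 ^ R}) - {x}"
      by (auto simp: P1_def)
    then have "H lam = H (hook_parent N b x)"
      using assms H_hook_parent[OF assms(2)] by auto
    then have "lam = hook_parent N b x"
      using partition_eq_if_H_eq[OF lam(1) is_partition_hook_parent] assms(2,3) lam(2) by simp
    with lam(2) show "lam \<in> hook_parent N b ` H mu"
      by blast
  qed
  show "hook_parent N b ` H mu \<subseteq> P1 R mu"
    using assms is_partition_hook_parent H_hook_parent by (fastforce simp: P1_def)
qed

lemma inj_on_hook_parent: "b < N \<Longrightarrow> inj_on (hook_parent N b) (insert N {1..b})"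
proof (rule inj_onI)
  fix x y
  assume "b < N" "x \<in> insert N {1..b}" "y \<in> insert N {1..b}" "hook_parent N b x = hook_parent N b y"
  then have "x + 2 * N \<in> insert (y + 2 * N) (insert N {1..b}) - {y}"
    using H_hook_parent[of b N x] H_hook_parent[of b N y] by auto
  with \<open>b < N\<close> show "x = y"
    by auto
qed

lemma Od_f_syt_hook_parent:
  assumes "b < 2 ^ r" "x \<in> insert (2 ^ r) {1..b}"
  shows "Od (f_syt (hook_parent (2 ^ r) b x)) =
    (if x = 2 ^ r then 1 else (-1) ^ (b - x)) * Od ((2 ^ r - 1) choose b)"
proof (cases "x = 2 ^ r")
  case True
  then have "Od (f_syt (hook_parent (2 ^ r) b x)) = Od ((3 * 2 ^ r - 1) choose b)"
    using assms(1) f_syt_hook_shape[of "3 * 2 ^ r - b" b] by (simp add: hook_parent_def)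
  with True show ?thesis
    using Od_binomial_triple_pred assms(1) by simp
next
  case False
  then have "Od (f_syt (hook_parent (2 ^ r) b x)) = (-1) ^ (b - x) * Od ((2 ^ r - 1) choose b)"
    using assms Od_card_tableaux_double_hook_parent[of x b r]
      cells_double_hook_shape[of "x + 2 * 2 ^ r - b" "2 ^ r - b + 1" "b - x" "x - 1"]
    by (simp add: hook_parent_def f_syt_eq_card_tableaux)
  with False show ?thesis
    by simp
qed

theorem lemma5p2:
  fixes R b :: nat and mu :: "nat list"
  assumes "R \<ge> 2"
    and "is_partition mu"
    and "sum_list mu = 2 ^ (R - 1)"
    and "b \<le> 2 ^ (R - 1) - 1"
    and "H mu = insert (2 ^ (R - 1)) {1..b}"
  shows "S (P1 R mu) mu = (if even b then 1 else 2)"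
proof -
  \<comment> \<open>The hypothesis on \<open>sum_list \<mu>\<close> is implied by the one on \<open>H \<mu>\<close> and not needed.\<close>
  define N :: nat where "N = 2 ^ (R - 1)"
  define M where "M = Od ((N - 1) choose b)"
  have RN: "2 ^ R = 2 * N"
    using assms(1) by (simp add: N_def flip: power_Suc)
  have "b \<le> N - 1" "N > 0" and Hmu: "H mu = insert N {1..b}"
    using assms(4,5) by (simp_all add: N_def)
  then have bN: "b < N"
    by linarith
  have "mu = (N - b) # replicate b 1"
    by (rule hook_shape_if_H_eq[OF assms(2) Hmu bN])
  then have f_mu: "Od (f_syt mu) = M"
    using f_syt_hook_shape[of "N - b" b] bN by (simp add: M_def)
  have "(\<Sum>lam\<in>P1 R mu. Od (f_syt lam)) =
      (\<Sum>x\<in>insert N {1..b}. Od (f_syt (hook_parent N b x)))"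
    unfolding P1_hook_eq[OF RN bN Hmu] Hmu using sum.reindex[OF inj_on_hook_parent[OF bN]] by simp
  also have "\<dots> = (\<Sum>x\<in>insert N {1..b}. (if x = N then 1 else (-1) ^ (b - x)) * M)"
    unfolding M_def N_def using bN by (intro sum.cong refl Od_f_syt_hook_parent) (simp_all add: N_def)
  also have "\<dots> = M * (1 + (if even b then 0 else 1))"
    using bN by (simp add: sum_distrib_left sum_alternating_signs[symmetric] algebra_simps)
  finally show ?thesis
    unfolding S_def using f_mu Od_square[of "(N - 1) choose b"]
    by (auto simp: M_def simp flip: of_int_sum)
qed

end
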